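(* Let $S$ be a semigroup and $p$ a strongly productive ultrafilter on $S$. If $p$ is multiplicatively isomorphic to an ordered union ultrafilter, then $p$ is sparse. In particular every ordered union ultrafilter is sparse.
   Context: For a sequence $\vec{x}=(x_n)_{n\in\omega}$ in $S$, $\mathrm{FP}(\vec{x})$ is the set of products $\prod_{i\in a}x_i$ (increasing order of indices), $a$ finite nonempty subset of $\omega$; $p$ is strongly productive if every $A\in p$ contains some $\mathrm{FP}(\vec{x})\in p$. $\mathbb{F}$ is the partial semigroup of finite nonempty subsets of $\omega$ where $ab$ is defined, and equals $a\cup b$, iff $\max a<\min b$; an ordered union ultrafilter is a strongly productive ultrafilter on $\mathbb{F}$ (every member contains $\mathrm{FP}(\vec{b})$, belonging to the ultrafilter, for some sequence $\vec{b}$ in $\mathbb{F}$ with $\max b_i<\min b_{i+1}$). $p$ is multiplicatively isomorphic to an ordered union ultrafilter if there is a sequence $\vec{x}$ in $S$ such that $f:\mathbb{F}\to\mathrm{FP}(\vec{x})$, $f(a)=\prod_{i\in a}x_i$, is injective and $\{f^{-1}[A]:A\in p\}$ is an ordered union ultrafilter. A strongly productive ultrafilter $p$ is sparse if for every $A\in p$ there are a sequence $\vec{x}=(x_n)_{n\in\omega}$ in $S$ and a subsequence $\vec{y}=(x_{k_n})_{n\in\omega}$ ($k_0<k_1<\cdots$) such that $\mathrm{FP}(\vec{y})\in p$, $\mathrm{FP}(\vec{x})\subseteq A$, and $\{k_n:n\in\omega\}$ is coinfinite in $\omega$. *)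

theory Defs
  imports Main
begin

definition is_ultrafilter :: "'a set \<Rightarrow> 'a set set \<Rightarrow> bool" where
  "is_ultrafilter U p \<longleftrightarrow>
     p \<subseteq> Pow U \<and> U \<in> p \<and> {} \<notin> p \<and>
     (\<forall>A B. A \<in> p \<and> B \<in> p \<longrightarrow> A \<inter> B \<in> p) \<and>
     (\<forall>A B. A \<in> p \<and> A \<subseteq> B \<and> B \<subseteq> U \<longrightarrow> B \<in> p) \<and>
     (\<forall>A. A \<subseteq> U \<longrightarrow> A \<in> p \<or> U - A \<in> p)"

fun lprod :: "'a::semigroup_mult list \<Rightarrow> 'a" where
  "lprod [] = undefined"
| "lprod [x] = x"
| "lprod (x # y # xs) = x * lprod (y # xs)"

text \<open>The finite nonempty subsets of omega: the underlying set of the partial semigroup F.\<close>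
definition FinSets :: "nat set set" where
  "FinSets = {a. finite a \<and> a \<noteq> {}}"

definition ordprod :: "(nat \<Rightarrow> 'a::semigroup_mult) \<Rightarrow> nat set \<Rightarrow> 'a" where
  "ordprod x a = lprod (map x (sorted_list_of_set a))"

definition FP :: "(nat \<Rightarrow> 'a::semigroup_mult) \<Rightarrow> 'a set" where
  "FP x = {ordprod x a | a. a \<in> FinSets}"

definition strongly_productive :: "'a::semigroup_mult set set \<Rightarrow> bool" where
  "strongly_productive p \<longleftrightarrow>
     is_ultrafilter UNIV p \<and> (\<forall>A\<in>p. \<exists>x. FP x \<in> p \<and> FP x \<subseteq> A)"

definition sparse :: "'a::semigroup_mult set set \<Rightarrow> bool" where
  "sparse p \<longleftrightarrow> strongly_productive p \<and>
     (\<forall>A\<in>p. \<exists>x k. strict_mono k \<and> FP (x \<circ> k) \<in> p \<and> FP x \<subseteq> A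
                 \<and> infinite (UNIV - range k))"

section \<open>The partial semigroup F (product ab = a \<union> b, defined iff max a < min b)\<close>

text \<open>Sequences in F whose finite products are all defined (block sequences).\<close>
definition block_seq :: "(nat \<Rightarrow> nat set) \<Rightarrow> bool" where
  "block_seq b \<longleftrightarrow> (\<forall>i. b i \<in> FinSets) \<and> (\<forall>i. Max (b i) < Min (b (Suc i)))"

text \<open>For a block sequence the (defined) product over a is the union.\<close>
definition FU :: "(nat \<Rightarrow> nat set) \<Rightarrow> nat set set" where
  "FU b = {(\<Union>i\<in>a. b i) | a. a \<in> FinSets}"

definition ordered_union_uf :: "nat set set set \<Rightarrow> bool" where
  "ordered_union_uf q \<longleftrightarrow> is_ultrafilter FinSets q \<and>
     (\<forall>A\<in>q. \<exists>b. block_seq b \<and> FU b \<in> q \<and> FU b \<subseteq> A)"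

definition sparse_F :: "nat set set set \<Rightarrow> bool" where
  "sparse_F q \<longleftrightarrow> ordered_union_uf q \<and>
     (\<forall>A\<in>q. \<exists>b k. block_seq b \<and> strict_mono k \<and> FU (b \<circ> k) \<in> q \<and> FU b \<subseteq> A
                 \<and> infinite (UNIV - range k))"

definition mult_iso_OU :: "'a::semigroup_mult set set \<Rightarrow> bool" where
  "mult_iso_OU p \<longleftrightarrow> (\<exists>x. inj_on (ordprod x) FinSets \<and>
     ordered_union_uf ((\<lambda>A. {a \<in> FinSets. ordprod x a \<in> A}) ` p))"

end

theory Submission imports Defs "HOL-Library.Infinite_Set" begin

text \<open>
  Let q be an ordered union ultrafilter and A \<in> q, and pick a block sequence c with
  FU c \<subseteq> A in q. The members of FU c that skip a block of c (miss c i although their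
  span covers it) form a set in q: otherwise its complement in FU c would contain some FU d
  in q, yet d 0 \<union> d 2 skips every block of c inside d 1. So some FU d in q consists of
  skipping sets. Each d j is a union of blocks of c with indices in a set K, which is
  infinite; the blocks skipped by the d j are pairwise distinct and not indexed by K, so K
  is coinfinite, and FU d \<subseteq> FU (c restricted to K).

  Along a multiplicative isomorphism a \<mapsto> \<Prod>i\<in>a. x i, FU of a block sequence c
  becomes FP of the sequence n \<mapsto> \<Prod>i\<in>c n. x i, so sparseness transfers to p.
\<close>

lemma lprod_append: "xs \<noteq> [] \<Longrightarrow> ys \<noteq> [] \<Longrightarrow> lprod (xs @ ys) = lprod xs * lprod ys"
proof (induction xs rule: lprod.induct)
  case 1 then show ?case by simp
next
  case (2 x) then show ?case by (cases ys) auto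
next
  case (3 x y xs) then show ?case by (simp add: mult.assoc)
qed

lemma sorted_list_of_set_Un_less:
  fixes A B :: "nat set"
  assumes "finite A" "finite B" "\<forall>a\<in>A. \<forall>b\<in>B. a < b"
  shows "sorted_list_of_set (A \<union> B) = sorted_list_of_set A @ sorted_list_of_set B"
proof -
  have "sorted_wrt (<) (sorted_list_of_set A @ sorted_list_of_set B)"
    and "set (sorted_list_of_set A @ sorted_list_of_set B) = A \<union> B"
    using assms by (auto simp: sorted_wrt_append)
  then show ?thesis
    using assms by (metis finite_UnI strict_sorted_equal strict_sorted_list_of_set set_sorted_list_of_set)
qed

lemma ordprod_Un:
  fixes A B :: "nat set"
  assumes "A \<in> FinSets" "B \<in> FinSets" "\<forall>a\<in>A. \<forall>b\<in>B. a < b"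
  shows "ordprod x (A \<union> B) = ordprod x A * ordprod x B"
  using assms by (simp add: FinSets_def ordprod_def sorted_list_of_set_Un_less lprod_append)

context
  fixes b :: "nat \<Rightarrow> nat set"
  assumes blocks: "block_seq b"
begin

lemma block_seq_finite: "finite (b i)"
  and block_seq_nonempty: "b i \<noteq> {}"
  using blocks by (auto simp: block_seq_def FinSets_def)

lemma block_seq_Max_less_Min: "i < j \<Longrightarrow> Max (b i) < Min (b j)"
proof (induction j)
  case 0 then show ?case by simp
next
  case (Suc j)
  have "Min (b j) \<le> Max (b j)"
    using block_seq_finite block_seq_nonempty by simp
  moreover have "Max (b j) < Min (b (Suc j))" using blocks by (simp add: block_seq_def)
  ultimately show ?case using Suc by (cases "i = j") force+
qed

lemma block_seq_less: "i < j \<Longrightarrow> u \<in> b i \<Longrightarrow> v \<in> b j \<Longrightarrow> u < v"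
  using block_seq_Max_less_Min[of i j] block_seq_finite
  by (meson Max_ge Min_le le_less_trans less_le_trans)

lemma block_seq_disjoint: "i \<noteq> j \<Longrightarrow> b i \<inter> b j = {}"
  using block_seq_less by (meson disjoint_iff less_asym linorder_neqE_nat)

lemma block_seq_span_unique:
  assumes "Min (b i) \<le> u" "u \<le> Max (b i)" "Min (b j) \<le> u" "u \<le> Max (b j)"
  shows "i = j"
  using assms block_seq_Max_less_Min[of i j] block_seq_Max_less_Min[of j i]
  by (meson leD le_less_trans linorder_neqE_nat)

lemma block_seq_comp: "strict_mono k \<Longrightarrow> block_seq (b \<circ> k)"
  using blocks block_seq_Max_less_Min by (simp add: block_seq_def strict_mono_def)

lemma ordprod_UN_blocks:
  assumes "a \<in> FinSets"
  shows "ordprod (\<lambda>n. ordprod x (b n)) a = ordprod x (\<Union>i\<in>a. b i)"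
proof -
  have "finite a" using assms by (simp add: FinSets_def)
  then have "a \<noteq> {} \<longrightarrow> ordprod (\<lambda>n. ordprod x (b n)) a = ordprod x (\<Union>i\<in>a. b i)"
  proof (induction a rule: finite_linorder_max_induct)
    case empty then show ?case by simp
  next
    case (insert m A)
    show ?case
    proof (cases "A = {}")
      case True then show ?thesis by (simp add: ordprod_def)
    next
      case False
      have "ordprod (\<lambda>n. ordprod x (b n)) (A \<union> {m})
            = ordprod (\<lambda>n. ordprod x (b n)) A * ordprod x (b m)"
        using insert False by (subst ordprod_Un) (auto simp: FinSets_def ordprod_def)
      also have "\<dots> = ordprod x ((\<Union>i\<in>A. b i) \<union> b m)"
        using insert False block_seq_finite block_seq_nonempty block_seq_less
        by (subst ordprod_Un) (auto simp: FinSets_def)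
      finally show ?thesis by (simp add: Un_commute)
    qed
  qed
  then show ?thesis using assms by (simp add: FinSets_def)
qed

lemma FP_ordprod_blocks: "FP (\<lambda>n. ordprod x (b n)) = ordprod x ` FU b"
proof -
  have "FP (\<lambda>n. ordprod x (b n)) = {ordprod x (\<Union>i\<in>a. b i) | a. a \<in> FinSets}"
    unfolding FP_def using ordprod_UN_blocks by metis
  then show ?thesis unfolding FU_def by blast
qed

lemma FU_subset_FinSets: "FU b \<subseteq> FinSets"
  using block_seq_finite block_seq_nonempty by (auto simp: FU_def FinSets_def)

end

lemma UN_mem_FU: "t \<in> FinSets \<Longrightarrow> (\<Union>i\<in>t. b i) \<in> FU b"
  unfolding FU_def by blast

lemma block_mem_FU: "b j \<in> FU b"
  using UN_mem_FU[of "{j}" b] by (simp add: FinSets_def)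

lemma FU_index_sets:
  assumes "\<forall>j. d j \<in> FU b"
  obtains T where "\<And>j. T j \<in> FinSets" "\<And>j. d j = (\<Union>i\<in>T j. b i)"
proof -
  have "\<forall>j. \<exists>t. t \<in> FinSets \<and> d j = (\<Union>i\<in>t. b i)"
    using assms unfolding FU_def by blast
  from choice[OF this] obtain T where "\<forall>j. T j \<in> FinSets \<and> d j = (\<Union>i\<in>T j. b i)" ..
  then show thesis using that by blast
qed

lemma FU_subset_FU:
  assumes "\<forall>j. d j \<in> FU b"
  shows "FU d \<subseteq> FU b"
proof
  obtain T where T: "\<And>j. T j \<in> FinSets" "\<And>j. d j = (\<Union>i\<in>T j. b i)"
    using FU_index_sets[OF assms] by blast
  fix z assume "z \<in> FU d"
  then obtain a where a: "a \<in> FinSets" "z = (\<Union>j\<in>a. d j)" by (auto simp: FU_def)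
  have "(\<Union>j\<in>a. T j) \<in> FinSets"
    using a(1) T(1) by (auto simp: FinSets_def)
  moreover have "z = (\<Union>i\<in>(\<Union>j\<in>a. T j). b i)"
    using a(2) T(2) by simp
  ultimately show "z \<in> FU b" using UN_mem_FU by metis
qed

lemma UN_mem_FU_comp:
  assumes "inj k" "t \<in> FinSets" "t \<subseteq> range k"
  shows "(\<Union>i\<in>t. b i) \<in> FU (b \<circ> k)"
proof -
  have "k -` t \<in> FinSets"
    using assms by (auto simp: FinSets_def finite_vimageI)
  moreover have "(\<Union>i\<in>t. b i) = (\<Union>n\<in>k -` t. (b \<circ> k) n)"
  proof -
    have "k ` (k -` t) = t" using assms(3) by blast
    then show ?thesis by (metis image_comp image_image)
  qed
  ultimately show ?thesis unfolding FU_def by blast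
qed

lemma FU_subset_FU_enumerate:
  assumes "\<And>j. T j \<in> FinSets" "\<And>j. d j = (\<Union>i\<in>T j. b i)" "infinite (\<Union>j. T j)"
  shows "FU d \<subseteq> FU (b \<circ> enumerate (\<Union>j. T j))"
proof (rule FU_subset_FU, rule allI)
  fix j
  have "inj (enumerate (\<Union>j. T j))"
    using assms(3) strict_mono_enumerate strict_mono_imp_inj_on by blast
  moreover have "T j \<subseteq> range (enumerate (\<Union>j. T j))"
    using assms(3) range_enumerate by blast
  ultimately show "d j \<in> FU (b \<circ> enumerate (\<Union>j. T j))"
    using UN_mem_FU_comp assms(1,2) by metis
qed

context
  fixes U :: "'a set" and q :: "'a set set"
  assumes uf: "is_ultrafilter U q"
begin

lemma ultrafilter_empty: "{} \<notin> q"
  using uf by (simp add: is_ultrafilter_def)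

lemma ultrafilter_Int: "X \<in> q \<Longrightarrow> Y \<in> q \<Longrightarrow> X \<inter> Y \<in> q"
  using uf by (simp add: is_ultrafilter_def)

lemma ultrafilter_mono: "X \<in> q \<Longrightarrow> X \<subseteq> Y \<Longrightarrow> Y \<subseteq> U \<Longrightarrow> Y \<in> q"
  using uf by (simp add: is_ultrafilter_def)

lemma ultrafilter_Diff:
  assumes "X \<in> q" "Y \<subseteq> X" "Y \<notin> q"
  shows "X - Y \<in> q"
proof -
  have "X \<subseteq> U" using uf assms(1) by (auto simp: is_ultrafilter_def)
  moreover have "\<forall>A\<subseteq>U. A \<in> q \<or> U - A \<in> q" using uf by (simp add: is_ultrafilter_def)
  ultimately have "U - Y \<in> q" using assms(2,3) by blast
  moreover have "X \<inter> (U - Y) = X - Y" using \<open>X \<subseteq> U\<close> by blast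
  ultimately show ?thesis using ultrafilter_Int[OF assms(1)] by metis
qed

end

lemma image_mem_ultrafilter:
  assumes p: "is_ultrafilter UNIV p"
    and q: "is_ultrafilter D ((\<lambda>A. {a \<in> D. f a \<in> A}) ` p)"
    and X: "X \<in> (\<lambda>A. {a \<in> D. f a \<in> A}) ` p"
  shows "f ` X \<in> p"
proof (rule ccontr)
  assume "f ` X \<notin> p"
  then have "UNIV - f ` X \<in> p" using p unfolding is_ultrafilter_def by blast
  then have "X \<inter> {a \<in> D. f a \<in> UNIV - f ` X} \<in> (\<lambda>A. {a \<in> D. f a \<in> A}) ` p"
    using ultrafilter_Int[OF q X] by blast
  then show False using ultrafilter_empty[OF q] by auto
qed

lemma ordered_union_uf_FU:
  "ordered_union_uf q \<Longrightarrow> A \<in> q \<Longrightarrow> \<exists>b. block_seq b \<and> FU b \<in> q \<and> FU b \<subseteq> A"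
  by (simp add: ordered_union_uf_def)

definition skips_block :: "(nat \<Rightarrow> nat set) \<Rightarrow> nat set \<Rightarrow> bool" where
  "skips_block c a \<longleftrightarrow> (\<exists>i. c i \<inter> a = {} \<and> Min a < Min (c i) \<and> Max (c i) < Max a)"

lemma ordered_union_uf_skips_block:
  assumes ou: "ordered_union_uf q" and c: "block_seq c" and "FU c \<in> q"
  shows "{a \<in> FU c. skips_block c a} \<in> q"
proof (rule ccontr)
  have uf: "is_ultrafilter FinSets q" using ou by (simp add: ordered_union_uf_def)
  assume "{a \<in> FU c. skips_block c a} \<notin> q"
  then have "FU c - {a \<in> FU c. skips_block c a} \<in> q"
    by (intro ultrafilter_Diff[OF uf \<open>FU c \<in> q\<close>]) auto
  then obtain d where d: "block_seq d" and dsub: "FU d \<subseteq> FU c - {a \<in> FU c. skips_block c a}"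
    using ordered_union_uf_FU[OF ou] by blast
  have "d 1 \<in> FU c" using dsub block_mem_FU by blast
  then obtain t where t: "t \<in> FinSets" "d 1 = (\<Union>j\<in>t. c j)" unfolding FU_def by blast
  then obtain i where "i \<in> t" unfolding FinSets_def by blast
  then have ci: "c i \<subseteq> d 1" using t(2) by blast
  define e where "e = d 0 \<union> d 2"
  have "e \<in> FU d"
    using UN_mem_FU[of "{0, 2}" d] by (simp add: e_def FinSets_def)
  then have "e \<in> FU c - {a \<in> FU c. skips_block c a}" using dsub by blast
  then have e: "e \<in> FU c" "\<not> skips_block c e" by simp_all
  have fin: "finite (d j)" "d j \<noteq> {}" "finite (c j)" "c j \<noteq> {}" for j
    using block_seq_finite[OF d] block_seq_nonempty[OF d] block_seq_finite[OF c] block_seq_nonempty[OF c]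
    by auto
  have "d 1 \<inter> d 0 = {}" "d 1 \<inter> d 2 = {}" using block_seq_disjoint[OF d] by simp_all
  then have "c i \<inter> e = {}" using ci unfolding e_def by blast
  moreover have "Min e < Min (c i)"
  proof -
    have "Min e \<le> Min (d 0)" using fin by (simp add: e_def)
    also have "Min (d 0) < Min (c i)"
      using block_seq_less[OF d, of 0 1 "Min (d 0)" "Min (c i)"] ci fin by (simp add: subset_iff)
    finally show ?thesis .
  qed
  moreover have "Max (c i) < Max e"
  proof -
    have "Max (c i) < Min (d 2)"
      using block_seq_less[OF d, of 1 2 "Max (c i)" "Min (d 2)"] ci fin by (simp add: subset_iff)
    also have "Min (d 2) \<le> Max e" using fin by (simp add: e_def)
    finally show ?thesis .
  qed
  ultimately show False using e by (auto simp: skips_block_def)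
qed

lemma infinite_UN_index_sets:
  assumes c: "block_seq c" and d: "block_seq d"
    and T: "\<And>j. T j \<in> FinSets" "\<And>j. d j = (\<Union>i\<in>T j. c i)"
  shows "infinite (\<Union>j. T j)"
proof -
  have "\<forall>j. \<exists>i. i \<in> T j" using T(1) by (auto simp: FinSets_def)
  from choice[OF this] obtain g where g: "\<And>j. g j \<in> T j" by blast
  have "inj g"
  proof (rule injI)
    fix j j' assume "g j = g j'"
    moreover have "c (g i) \<subseteq> d i" for i using T(2)[of i] UN_upper[OF g] by simp
    ultimately have "c (g j) \<subseteq> d j \<inter> d j'" by (metis Int_subset_iff)
    then show "j = j'" using block_seq_disjoint[OF d] block_seq_nonempty[OF c] by blast
  qed
  moreover have "range g \<subseteq> (\<Union>j. T j)" using g by blast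
  ultimately show ?thesis using range_inj_infinite infinite_super by metis
qed

lemma coinfinite_UN_index_sets:
  assumes c: "block_seq c" and d: "block_seq d"
    and T: "\<And>j. d j = (\<Union>i\<in>T j. c i)" and skip: "\<forall>j. skips_block c (d j)"
  shows "infinite (UNIV - (\<Union>j. T j))"
proof -
  from choice[OF skip[unfolded skips_block_def]] obtain h where
    h: "\<And>j. c (h j) \<inter> d j = {}" "\<And>j. Min (d j) < Min (c (h j))" "\<And>j. Max (c (h j)) < Max (d j)"
    by blast
  have fin: "finite (d j)" "d j \<noteq> {}" "finite (c j)" "c j \<noteq> {}" for j
    using block_seq_finite[OF d] block_seq_nonempty[OF d] block_seq_finite[OF c] block_seq_nonempty[OF c]
    by auto
  have h_span: "Min (d j) \<le> Min (c (h j)) \<and> Min (c (h j)) \<le> Max (d j)" for j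
  proof -
    have "Min (c (h j)) \<le> Max (c (h j))" using fin by simp
    then show ?thesis using h(2,3)[of j] by linarith
  qed
  have "inj h"
    by (rule injI) (metis h_span block_seq_span_unique[OF d])
  moreover have "h j \<notin> (\<Union>j. T j)" for j
  proof
    assume "h j \<in> (\<Union>j. T j)"
    then obtain m where "c (h j) \<subseteq> d m" using T by blast
    then have "Min (c (h j)) \<in> d m" using fin Min_in by blast
    then have "m = j"
      using block_seq_span_unique[OF d] h_span[of j] fin Min_le Max_ge by meson
    then show False using h(1)[of j] \<open>c (h j) \<subseteq> d m\<close> fin by blast
  qed
  then have "range h \<subseteq> UNIV - (\<Union>j. T j)" by blast
  ultimately show ?thesis using range_inj_infinite infinite_super by metis
qed

lemma skipping_blocks_sparse_subsequence:
  assumes c: "block_seq c" and d: "block_seq d"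
    and dc: "\<forall>j. d j \<in> FU c" and skip: "\<forall>j. skips_block c (d j)"
  shows "\<exists>k. strict_mono k \<and> infinite (UNIV - range k) \<and> FU d \<subseteq> FU (c \<circ> k)"
proof -
  obtain T where T: "\<And>j. T j \<in> FinSets" "\<And>j. d j = (\<Union>i\<in>T j. c i)"
    using FU_index_sets[OF dc] by blast
  define K where "K = (\<Union>j. T j)"
  have "infinite K" unfolding K_def using infinite_UN_index_sets[OF c d T] .
  define k where "k = enumerate K"
  have "strict_mono k" "range k = K"
    using \<open>infinite K\<close> by (simp_all add: k_def strict_mono_enumerate range_enumerate)
  moreover have "infinite (UNIV - K)"
    unfolding K_def using coinfinite_UN_index_sets[OF c d T(2) skip] .
  moreover have "FU d \<subseteq> FU (c \<circ> k)"
    unfolding k_def K_def using \<open>infinite K\<close> K_def by (intro FU_subset_FU_enumerate T) simp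
  ultimately show ?thesis by metis
qed

lemma ordered_union_uf_sparse_F:
  assumes ou: "ordered_union_uf q"
  shows "sparse_F q"
  unfolding sparse_F_def
proof (intro conjI ballI)
  show "ordered_union_uf q" by fact
  fix A assume "A \<in> q"
  have uf: "is_ultrafilter FinSets q" using ou by (simp add: ordered_union_uf_def)
  obtain c where c: "block_seq c" "FU c \<in> q" "FU c \<subseteq> A"
    using ordered_union_uf_FU[OF ou \<open>A \<in> q\<close>] by blast
  obtain d where d: "block_seq d" "FU d \<in> q" and skipping: "FU d \<subseteq> {a \<in> FU c. skips_block c a}"
    using ordered_union_uf_FU[OF ou ordered_union_uf_skips_block[OF ou c(1,2)]] by blast
  have "\<forall>j. d j \<in> FU c" "\<forall>j. skips_block c (d j)"
    using skipping block_mem_FU by blast+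
  then obtain k where k: "strict_mono k" "infinite (UNIV - range k)" "FU d \<subseteq> FU (c \<circ> k)"
    using skipping_blocks_sparse_subsequence[OF c(1) d(1)] by blast
  have "FU (c \<circ> k) \<in> q"
    using ultrafilter_mono[OF uf d(2) k(3) FU_subset_FinSets[OF block_seq_comp[OF c(1) k(1)]]] .
  then show "\<exists>b k. block_seq b \<and> strict_mono k \<and> FU (b \<circ> k) \<in> q \<and> FU b \<subseteq> A
               \<and> infinite (UNIV - range k)"
    using c k by blast
qed

lemma sparse_if_mult_iso_OU:
  assumes sp: "strongly_productive p" and mi: "mult_iso_OU p"
  shows "sparse p"
  unfolding sparse_def
proof (intro conjI ballI)
  show "strongly_productive p" by fact
  fix A assume "A \<in> p"
  have puf: "is_ultrafilter UNIV p" using sp by (simp add: strongly_productive_def)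
  obtain x where ou: "ordered_union_uf ((\<lambda>A. {a \<in> FinSets. ordprod x a \<in> A}) ` p)"
    using mi by (auto simp: mult_iso_OU_def)
  define q where "q = (\<lambda>A. {a \<in> FinSets. ordprod x a \<in> A}) ` p"
  have quf: "is_ultrafilter FinSets q" using ou by (simp add: q_def ordered_union_uf_def)
  have "{a \<in> FinSets. ordprod x a \<in> A} \<in> q" using \<open>A \<in> p\<close> by (simp add: q_def)
  then obtain c k where c: "block_seq c" "FU c \<subseteq> {a \<in> FinSets. ordprod x a \<in> A}"
    and k: "strict_mono k" "FU (c \<circ> k) \<in> q" "infinite (UNIV - range k)"
    using ordered_union_uf_sparse_F[OF ou] unfolding sparse_F_def q_def by blast
  define y where "y = (\<lambda>n. ordprod x (c n))"
  have "FP y \<subseteq> A" unfolding y_def FP_ordprod_blocks[OF c(1)] using c(2) by blast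
  moreover have "FP (y \<circ> k) \<in> p"
  proof -
    have "FP (y \<circ> k) = ordprod x ` FU (c \<circ> k)"
      using FP_ordprod_blocks[OF block_seq_comp[OF c(1) k(1)]] by (simp add: y_def comp_def)
    then show ?thesis
      using image_mem_ultrafilter[OF puf quf[unfolded q_def] k(2)[unfolded q_def]] by simp
  qed
  ultimately show "\<exists>y k. strict_mono k \<and> FP (y \<circ> k) \<in> p \<and> FP y \<subseteq> A \<and> infinite (UNIV - range k)"
    using k by blast
qed

theorem mainTheorem15:
  shows "(\<forall>p :: 'a::semigroup_mult set set.
            strongly_productive p \<and> mult_iso_OU p \<longrightarrow> sparse p)
         \<and> (\<forall>q. ordered_union_uf q \<longrightarrow> sparse_F q)"
  by (simp add: sparse_if_mult_iso_OU ordered_union_uf_sparse_F)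

end
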